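(* Let $\psi:[0,1]\to[0,1]$ be convex and increasing with $\psi(0)=0$, and let $C\ge e^{1/e}$. Let $x=(x_1,\dots,x_n)$ be a stochastic vector and $y=\max_i x_i$. Then \[ \sum_{j=1}^n\psi\Big(\frac{x_j}{C\prod_{k=1}^n(1-x_k)^{1-x_k}}\Big)\ \le\ \frac1y\,\psi\Big(\frac{y\,e^{1-y}}{C\,(1-y)^{1-y}}\Big). \]
   Context: A stochastic vector has nonnegative entries summing to $1$. Convention: $0^0=1$. *)

theory Defs
  imports "HOL-Analysis.Analysis"
begin

text \<open>Real power a^b for a \<ge> 0 with the convention 0^0 = 1 (Isabelle's powr has 0 powr 0 = 0).\<close>
definition pow0 :: "real \<Rightarrow> real \<Rightarrow> real" where
  "pow0 a b = (if a = 0 then (if b = 0 then 1 else 0) else a powr b)"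

end

theory Submission
  imports Defs
begin

text \<open>Let \<open>D = C (1 - y)^(1 - y) / e^(1 - y)\<close>. Applying \<open>u ln u \<ge> u - 1\<close> to every
  factor except the one at a maximal entry \<open>x\<^sub>m = y\<close>, and using that the other entries sum
  to \<open>1 - y\<close>, shows \<open>\<Prod>\<^sub>k (1 - x\<^sub>k)^(1 - x\<^sub>k) \<ge> (1 - y)^(1 - y) / e^(1 - y)\<close>, so each
  argument on the left is at most \<open>x\<^sub>j / D\<close>. From \<open>ln y \<le> y - 1\<close>, \<open>u ln u \<ge> -1/e\<close> and
  \<open>ln C \<ge> 1/e\<close> one gets \<open>y \<le> D\<close>. Then \<open>\<psi> (x\<^sub>j / D) = \<psi> ((x\<^sub>j / y) (y / D)) \<le> (x\<^sub>j / y) \<psi> (y / D)\<close>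
  by convexity and \<open>\<psi> 0 = 0\<close>, and the \<open>x\<^sub>j\<close> sum to 1.\<close>

lemma pow0_self_eq_exp: "0 \<le> a \<Longrightarrow> pow0 a a = exp (a * ln a)"
  by (auto simp: pow0_def powr_def)

lemma mult_ln_self_ge_diff_one:
  fixes u :: real
  assumes "0 \<le> u"
  shows "u - 1 \<le> u * ln u"
proof (cases "u = 0")
  case False
  with assms have u: "0 < u" by simp
  have "- ln u \<le> 1 / u - 1"
    using ln_le_minus_one[of "1 / u"] u by (simp add: ln_div)
  then have "u * (- ln u) \<le> u * (1 / u - 1)"
    using u by (intro mult_left_mono) auto
  also have "\<dots> = 1 - u"
    using u by (simp add: field_simps)
  finally show ?thesis
    by simp
qed simp

lemma mult_ln_self_ge_neg_inverse_exp:
  fixes u :: real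
  assumes "0 \<le> u"
  shows "- 1 / exp 1 \<le> u * ln u"
proof (cases "u = 0")
  case False
  with assms have u: "0 < u" by simp
  have "exp 1 * u - 1 \<le> exp 1 * u * ln (exp 1 * u)"
    using assms by (intro mult_ln_self_ge_diff_one) simp
  also have "\<dots> = exp 1 * u + exp 1 * (u * ln u)"
    using u by (simp add: ln_mult algebra_simps)
  finally show ?thesis
    by (simp add: field_simps)
qed simp

lemma sum_complement_ln_ge:
  fixes x :: "'a \<Rightarrow> real"
  assumes "finite A" "m \<in> A" "\<forall>k\<in>A. x k \<le> 1" "(\<Sum>k\<in>A. x k) = 1"
  shows "(1 - x m) * ln (1 - x m) - (1 - x m) \<le> (\<Sum>k\<in>A. (1 - x k) * ln (1 - x k))"
proof -
  have "(\<Sum>k\<in>A - {m}. (1 - x k) - 1) = - (1 - x m)"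
    using assms by (simp add: sum_negf sum_diff1)
  then have "(1 - x m) * ln (1 - x m) - (1 - x m)
      = (1 - x m) * ln (1 - x m) + (\<Sum>k\<in>A - {m}. (1 - x k) - 1)"
    by simp
  also have "\<dots> \<le> (1 - x m) * ln (1 - x m) + (\<Sum>k\<in>A - {m}. (1 - x k) * ln (1 - x k))"
    using assms(3) by (intro add_left_mono sum_mono mult_ln_self_ge_diff_one) auto
  also have "\<dots> = (\<Sum>k\<in>A. (1 - x k) * ln (1 - x k))"
    using assms(1,2) by (simp add: sum.remove)
  finally show ?thesis .
qed

lemma prod_pow0_complement_ge:
  fixes x :: "'a \<Rightarrow> real"
  assumes "finite A" "m \<in> A" "\<forall>k\<in>A. x k \<le> 1" "(\<Sum>k\<in>A. x k) = 1"
  shows "pow0 (1 - x m) (1 - x m) / exp (1 - x m) \<le> (\<Prod>k\<in>A. pow0 (1 - x k) (1 - x k))"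
proof -
  have "pow0 (1 - x m) (1 - x m) / exp (1 - x m) = exp ((1 - x m) * ln (1 - x m) - (1 - x m))"
    using assms(2,3) by (simp add: pow0_self_eq_exp exp_diff)
  also have "\<dots> \<le> exp (\<Sum>k\<in>A. (1 - x k) * ln (1 - x k))"
    using sum_complement_ln_ge[OF assms] by simp
  also have "\<dots> = (\<Prod>k\<in>A. pow0 (1 - x k) (1 - x k))"
    using assms(1,3) by (simp add: exp_sum pow0_self_eq_exp)
  finally show ?thesis .
qed

lemma le_pow0_complement_div_exp:
  fixes y C :: real
  assumes "0 < y" "y \<le> 1" "exp (1 / exp 1) \<le> C"
  shows "y \<le> C * (pow0 (1 - y) (1 - y) / exp (1 - y))"
proof -
  have C: "0 < C"
    using assms(3) exp_gt_zero[of "1 / exp 1"] by linarith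
  have "1 / exp 1 \<le> ln C"
    using assms(3) ln_ge_iff[OF C] by auto
  have "ln y + 1 - y \<le> 0"
    using ln_le_minus_one[OF assms(1)] by simp
  moreover have "- 1 / exp 1 \<le> (1 - y) * ln (1 - y)"
    using assms(2) by (intro mult_ln_self_ge_neg_inverse_exp) simp
  ultimately have "ln y \<le> ln C + (1 - y) * ln (1 - y) - (1 - y)"
    using \<open>1 / exp 1 \<le> ln C\<close> by simp
  then have "exp (ln y) \<le> exp (ln C + (1 - y) * ln (1 - y) - (1 - y))"
    by simp
  then show ?thesis
    using assms C by (simp add: exp_add exp_diff pow0_self_eq_exp)
qed

lemma convex_on_scale_le:
  fixes f :: "'a::real_vector \<Rightarrow> real"
  assumes "convex_on S f" "0 \<in> S" "t \<in> S" "f 0 = 0" "0 \<le> s" "s \<le> 1"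
  shows "f (s *\<^sub>R t) \<le> s * f t"
  using convex_onD[OF assms(1), of s 0 t] assms by simp

lemma convex_mono_on_divide_le:
  fixes psi :: "real \<Rightarrow> real"
  assumes "convex_on {0..1} psi" "mono_on {0..1} psi" "psi 0 = 0"
    and "0 \<le> a" "a \<le> y" "0 < y" "y \<le> D" "D \<le> E"
  shows "psi (a / E) \<le> a / y * psi (y / D)"
proof -
  have D: "0 < D" "0 < E"
    using assms by linarith+
  have "0 \<le> a / E" "a / E \<le> a / D" "a / D \<le> y / D" "y / D \<le> 1"
    using assms D by (auto intro: divide_left_mono divide_right_mono)
  then have "psi (a / E) \<le> psi (a / D)"
    by (intro mono_onD[OF assms(2)]) auto
  also have "a / D = (a / y) *\<^sub>R (y / D)"
    using assms(6) by simp
  also have "psi \<dots> \<le> a / y * psi (y / D)"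
    using assms D \<open>y / D \<le> 1\<close> by (intro convex_on_scale_le) auto
  finally show ?thesis .
qed

lemma stochastic_le_one:
  fixes x :: "'a \<Rightarrow> real"
  assumes "finite A" "\<forall>i\<in>A. 0 \<le> x i" "(\<Sum>i\<in>A. x i) = 1" "k \<in> A"
  shows "x k \<le> 1"
  using member_le_sum[of k A x] assms by auto

lemma stochastic_Max_pos:
  fixes x :: "'a \<Rightarrow> real"
  assumes "finite A" "(\<Sum>i\<in>A. x i) = 1"
  shows "0 < Max (x ` A)"
proof (rule ccontr)
  assume "\<not> 0 < Max (x ` A)"
  then have "\<forall>i\<in>A. x i \<le> 0"
    using assms(1) by (meson Max_ge finite_imageI image_eqI order.trans not_less)
  then have "(\<Sum>i\<in>A. x i) \<le> 0"
    by (intro sum_nonpos) auto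
  with assms(2) show False
    by simp
qed

theorem lemma5p7:
  fixes psi :: "real \<Rightarrow> real" and C :: real and n :: nat and x :: "nat \<Rightarrow> real" and y :: real
  assumes psi_convex: "convex_on {0..1} psi"
    and psi_mono: "mono_on {0..1} psi"
    and psi_range: "psi ` {0..1} \<subseteq> {0..1}"
    and psi_zero: "psi 0 = 0"
    and C_ge: "C \<ge> exp (1 / exp 1)"
    and x_nonneg: "\<forall>i\<in>{1..n}. x i \<ge> 0"
    and x_sum: "(\<Sum>i=1..n. x i) = 1"
    and y_def: "y = Max (x ` {1..n})"
  shows "(\<Sum>j=1..n. psi (x j / (C * (\<Prod>k=1..n. pow0 (1 - x k) (1 - x k)))))
           \<le> (1 / y) * psi (y * exp (1 - y) / (C * pow0 (1 - y) (1 - y)))"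
proof -
  define P where "P = (\<Prod>k=1..n. pow0 (1 - x k) (1 - x k))"
  define D where "D = C * (pow0 (1 - y) (1 - y) / exp (1 - y))"
  have x_le_one: "\<forall>k\<in>{1..n}. x k \<le> 1"
    using stochastic_le_one[OF _ x_nonneg x_sum] by simp
  have x_le_y: "\<forall>j\<in>{1..n}. x j \<le> y"
    using y_def by auto
  have "{1..n} \<noteq> {}"
    using x_sum by (cases n) auto
  then have "y \<in> x ` {1..n}"
    unfolding y_def by (intro Max_in) auto
  then obtain m where m: "m \<in> {1..n}" "x m = y"
    by auto
  have y: "0 < y" "y \<le> 1"
    using stochastic_Max_pos[of "{1..n}" x] x_sum y_def m x_le_one by auto
  have "pow0 (1 - y) (1 - y) / exp (1 - y) \<le> P"
    using prod_pow0_complement_ge[OF _ m(1) x_le_one x_sum] m(2) unfolding P_def by simp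
  then have "D \<le> C * P"
    unfolding D_def by (rule mult_left_mono) (use C_ge exp_gt_zero[of "1 / exp 1"] in linarith)
  moreover have "y \<le> D"
    unfolding D_def by (rule le_pow0_complement_div_exp[OF y C_ge])
  ultimately have "(\<Sum>j=1..n. psi (x j / (C * P))) \<le> (\<Sum>j=1..n. x j / y * psi (y / D))"
    using x_nonneg x_le_y y
    by (intro sum_mono convex_mono_on_divide_le[OF psi_convex psi_mono psi_zero]) auto
  also have "\<dots> = (\<Sum>j=1..n. x j) / y * psi (y / D)"
    by (simp add: sum_distrib_right sum_divide_distrib)
  finally show ?thesis
    using x_sum unfolding P_def D_def by simp
qed

end
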